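(* Let $d\ge1$ and let $Z_1,Z_2$ be two nonzero $d$-cycles over the vertex set $[d+4]$. Then there is a $(d-1)$-simplex belonging to both $K(\mathrm{Supp}(Z_1))$ and $K(\mathrm{Supp}(Z_2))$.
   Context: Fix a field $\mathbb F$. A $d$-simplex is a $(d+1)$-element subset of the vertex set, oriented by increasing order $s_1<\dots<s_{d+1}$. A $d$-chain is a formal $\mathbb F$-combination of $d$-simplices with support the set of simplices with nonzero coefficient; $\partial\sigma=\sum_i(-1)^{i-1}(\sigma\setminus\{s_i\})$ extended linearly; a $d$-cycle is a $d$-chain $Z$ with $\partial Z=0$. For a set $S$ of simplices, $K(S)$ is the complex of all subsets of members of $S$. *)

theory Defs
  imports Main
begin

definition simplices :: "nat \<Rightarrow> nat \<Rightarrow> nat set set" where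
  "simplices n d = {s. s \<subseteq> {1..n} \<and> card s = d + 1}"

definition is_chain :: "nat \<Rightarrow> nat \<Rightarrow> (nat set \<Rightarrow> 'a::field) \<Rightarrow> bool" where
  "is_chain n d c \<longleftrightarrow> (\<forall>s. c s \<noteq> 0 \<longrightarrow> s \<in> simplices n d)"

definition supp :: "(nat set \<Rightarrow> 'a::zero) \<Rightarrow> nat set set" where
  "supp c = {s. c s \<noteq> 0}"

(* boundary of a d-chain: linear extension of
   \<partial>\<sigma> = \<Sum>_i (-1)^(i-1) (\<sigma> - {s_i}), s_1 < ... < s_{d+1};
   the result is given as a coefficient function on (d-1)-simplices *)
definition boundary :: "nat \<Rightarrow> nat \<Rightarrow> (nat set \<Rightarrow> 'a::field) \<Rightarrow> (nat set \<Rightarrow> 'a)" where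
  "boundary n d c = (\<lambda>\<tau>. \<Sum>\<sigma>\<in>simplices n d.
      \<Sum>i<card \<sigma>. (if \<sigma> - {sorted_list_of_set \<sigma> ! i} = \<tau>
                     then (-1) ^ i * c \<sigma> else 0))"

definition is_cycle :: "nat \<Rightarrow> nat \<Rightarrow> (nat set \<Rightarrow> 'a::field) \<Rightarrow> bool" where
  "is_cycle n d c \<longleftrightarrow> is_chain n d c \<and> (\<forall>\<tau>. boundary n d c \<tau> = 0)"

definition K :: "nat set set \<Rightarrow> nat set set" where
  "K S = {t. \<exists>s\<in>S. t \<subseteq> s}"

end

theory Submission
  imports Defs
begin

text \<open>Every codimension-one face of a simplex in the support of a cycle lies in a second
  simplex of the support, since its coefficient in the boundary must cancel. Passing to
  complements in \<open>[d+4]\<close>, the supports become families of 3-sets closed under a basis-exchange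
  rule, and two such families always contain members sharing two points. Complements sharing
  two points correspond to \<open>d\<close>-simplices sharing \<open>d\<close> vertices, i.e. a common \<open>(d-1)\<close>-face.\<close>

definition exchange_closed :: "'a set \<Rightarrow> 'a set set \<Rightarrow> bool" where
  "exchange_closed U C \<longleftrightarrow> (\<forall>A\<in>C. \<forall>v\<in>U - A. \<exists>w\<in>A. insert v (A - {w}) \<in> C)"

lemma two_le_card_Int:
  assumes "finite S" "x \<noteq> y" "x \<in> S" "y \<in> S" "x \<in> T" "y \<in> T"
  shows "2 \<le> card (S \<inter> T)"
proof -
  have "card {x, y} \<le> card (S \<inter> T)"
    using assms by (intro card_mono) auto
  with \<open>x \<noteq> y\<close> show ?thesis by simp
qed

lemma exchange_closed_share_two_if_share_one:
  assumes X1: "exchange_closed U C1" and X2: "exchange_closed U C2"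
    and C1: "\<And>A. A \<in> C1 \<Longrightarrow> A \<subseteq> U \<and> card A = 3"
    and C2: "\<And>B. B \<in> C2 \<Longrightarrow> B \<subseteq> U \<and> card B = 3"
    and A: "A \<in> C1" and B: "B \<in> C2" and one: "card (A \<inter> B) = 1"
  shows "\<exists>A\<in>C1. \<exists>B\<in>C2. 2 \<le> card (A \<inter> B)"
proof (rule ccontr)
  assume "\<not> ?thesis"
  then have apart: "False" if "S \<in> C1" "T \<in> C2" "u \<noteq> v" "u \<in> S" "v \<in> S" "u \<in> T" "v \<in> T"
    for S T u v
    using that two_le_card_Int[of S u v T] C1[OF \<open>S \<in> C1\<close>] card.infinite by fastforce
  obtain a where a: "A \<inter> B = {a}"
    using one by (rule card_1_singletonE)
  have "card (A - {a}) = 2"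
    using C1[OF A] a by (auto simp: card_Diff_singleton_if)
  then obtain x y where xy: "A - {a} = {x, y}" "x \<noteq> y"
    by (auto simp: card_2_iff)
  have "card (B - {a}) = 2"
    using C2[OF B] a by (auto simp: card_Diff_singleton_if)
  then obtain p q where pq: "B - {a} = {p, q}" "p \<noteq> q"
    by (auto simp: card_2_iff)
  have Aeq: "A = {a, x, y}" and Beq: "B = {a, p, q}"
    using xy pq a by blast+
  have distinct: "x \<noteq> p" "x \<noteq> q" "y \<noteq> p" "y \<noteq> q" "a \<noteq> x" "a \<noteq> y" "a \<noteq> p" "a \<noteq> q"
    using a xy pq by (metis Diff_iff Int_iff insertCI singletonD)+
  have in_U: "x \<in> U" "p \<in> U"
    using C1[OF A] C2[OF B] Aeq Beq by auto
  txt \<open>Exchanging in a point of the other triple cannot drop any element other than \<open>a\<close>,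
    for otherwise the new triple would meet the other one in two points.\<close>
  have xyp: "{x, y, p} \<in> C1"
  proof -
    obtain w where w: "w \<in> A" "insert p (A - {w}) \<in> C1"
      using X1 A in_U distinct Aeq unfolding exchange_closed_def by fastforce
    show ?thesis
    proof (cases "w = a")
      case True
      then show ?thesis using w Aeq distinct by (simp add: insert_commute insert_Diff_if)
    next
      case False
      then show ?thesis using apart[OF w(2) B, of a p] Aeq Beq distinct by blast
    qed
  qed
  have pqx: "{p, q, x} \<in> C2"
  proof -
    obtain w where w: "w \<in> B" "insert x (B - {w}) \<in> C2"
      using X2 B in_U distinct Beq unfolding exchange_closed_def by fastforce
    show ?thesis
    proof (cases "w = a")
      case True
      then show ?thesis using w Beq distinct by (auto simp: insert_commute insert_Diff_if)
    next
      case False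
      then show ?thesis using apart[OF A w(2), of a x] Aeq Beq distinct by blast
    qed
  qed
  show False
    using apart[OF xyp pqx, of x p] distinct by simp
qed

lemma exchange_closed_share_two:
  assumes X1: "exchange_closed U C1" and X2: "exchange_closed U C2"
    and C1: "\<And>A. A \<in> C1 \<Longrightarrow> A \<subseteq> U \<and> card A = 3"
    and C2: "\<And>B. B \<in> C2 \<Longrightarrow> B \<subseteq> U \<and> card B = 3"
    and A: "A \<in> C1" and B: "B \<in> C2"
  shows "\<exists>A\<in>C1. \<exists>B\<in>C2. 2 \<le> card (A \<inter> B)"
proof -
  have share_one: "\<exists>A\<in>C1. \<exists>B\<in>C2. 2 \<le> card (A \<inter> B)"
    if "A' \<in> C1" "B' \<in> C2" "card (A' \<inter> B') = 1" for A' B'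
    using exchange_closed_share_two_if_share_one[OF X1 X2 _ _ that] C1 C2 by blast
  have "finite A"
    using C1[OF A] card.infinite by fastforce
  consider "card (A \<inter> B) = 0" | "card (A \<inter> B) = 1" | "2 \<le> card (A \<inter> B)"
    by linarith
  then show ?thesis
  proof cases
    case 1
    then have "A \<inter> B = {}"
      using \<open>finite A\<close> by simp
    obtain p where p: "p \<in> B"
      using C2[OF B] by (auto simp: card_3_iff)
    then obtain w where w: "insert p (A - {w}) \<in> C1"
      using X1 A \<open>A \<inter> B = {}\<close> C2[OF B] unfolding exchange_closed_def by blast
    have "insert p (A - {w}) \<inter> B = {p}"
      using \<open>A \<inter> B = {}\<close> p by auto
    then show ?thesis
      using share_one[OF w B] by simp
  next
    case 2
    then show ?thesis using share_one A B by blast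
  next
    case 3
    then show ?thesis using A B by blast
  qed
qed

lemma cycle_supp_simplex:
  assumes "is_cycle n d Z" "\<sigma> \<in> supp Z"
  shows "\<sigma> \<subseteq> {1..n}" "card \<sigma> = d + 1"
  using assms unfolding is_cycle_def is_chain_def simplices_def supp_def by blast+

lemma sum_face_coefficients_single:
  fixes c :: "'a::comm_ring_1"
  assumes "finite \<sigma>" "v \<in> \<sigma>"
  shows "\<exists>i. (\<Sum>i<card \<sigma>. if \<sigma> - {sorted_list_of_set \<sigma> ! i} = \<sigma> - {v} then (-1) ^ i * c else 0)
    = (-1) ^ i * c"
proof -
  define s where "s = sorted_list_of_set \<sigma>"
  have s: "distinct s" "length s = card \<sigma>" "set s = \<sigma>"
    using assms(1) unfolding s_def by auto
  obtain i0 where i0: "i0 < card \<sigma>" "s ! i0 = v"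
    using assms(2) s by (metis in_set_conv_nth)
  have "(\<sigma> - {s ! i} = \<sigma> - {v}) \<longleftrightarrow> i = i0" if "i < card \<sigma>" for i
  proof
    assume "\<sigma> - {s ! i} = \<sigma> - {v}"
    moreover have "s ! i \<in> \<sigma>"
      using that s nth_mem by metis
    ultimately have "s ! i = v"
      using assms(2) by blast
    then show "i = i0"
      using i0 s that nth_eq_iff_index_eq by metis
  qed (use i0 in simp)
  then have "(\<Sum>i<card \<sigma>. if \<sigma> - {s ! i} = \<sigma> - {v} then (-1) ^ i * c else 0)
      = (\<Sum>i<card \<sigma>. if i = i0 then (-1) ^ i * c else 0)"
    by (intro sum.cong) auto
  also have "\<dots> = (-1) ^ i0 * c"
    using i0 by simp
  finally show ?thesis
    unfolding s_def by blast
qed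

lemma cycle_supp_face_shared:
  fixes Z :: "nat set \<Rightarrow> 'a::field"
  assumes cycle: "is_cycle n d Z" and \<sigma>: "\<sigma> \<in> supp Z" and v: "v \<in> \<sigma>"
  shows "\<exists>\<sigma>'\<in>supp Z. \<sigma>' \<noteq> \<sigma> \<and> \<sigma> - {v} \<subseteq> \<sigma>'"
proof (rule ccontr)
  assume none: "\<not> ?thesis"
  define f where "f \<sigma>' = (\<Sum>i<card \<sigma>'. if \<sigma>' - {sorted_list_of_set \<sigma>' ! i} = \<sigma> - {v}
    then (-1) ^ i * Z \<sigma>' else 0)" for \<sigma>'
  have \<sigma>_simplex: "\<sigma> \<in> simplices n d"
    using cycle_supp_simplex[OF cycle \<sigma>] unfolding simplices_def by blast
  have "finite (simplices n d)"
    unfolding simplices_def by (rule finite_subset[of _ "Pow {1..n}"]) auto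
  then have "boundary n d Z (\<sigma> - {v}) = f \<sigma> + (\<Sum>\<sigma>'\<in>simplices n d - {\<sigma>}. f \<sigma>')"
    unfolding boundary_def f_def by (rule sum.remove[OF _ \<sigma>_simplex])
  also have "(\<Sum>\<sigma>'\<in>simplices n d - {\<sigma>}. f \<sigma>') = 0"
  proof (intro sum.neutral ballI)
    fix \<sigma>' assume "\<sigma>' \<in> simplices n d - {\<sigma>}"
    show "f \<sigma>' = 0"
    proof (cases "Z \<sigma>' = 0")
      case False
      then have "\<sigma>' - {sorted_list_of_set \<sigma>' ! i} \<noteq> \<sigma> - {v}" for i
        using none \<open>\<sigma>' \<in> simplices n d - {\<sigma>}\<close> unfolding supp_def by blast
      then show ?thesis
        unfolding f_def by simp
    qed (simp add: f_def sum.neutral)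
  qed
  finally have "f \<sigma> = 0"
    using cycle unfolding is_cycle_def by simp
  moreover obtain i where "f \<sigma> = (-1) ^ i * Z \<sigma>"
    using sum_face_coefficients_single[of \<sigma> v "Z \<sigma>"] \<sigma>_simplex v
    unfolding f_def simplices_def by (auto dest: finite_subset)
  ultimately show False
    using \<sigma> unfolding supp_def by simp
qed

lemma exchange_closed_complements:
  assumes "finite U" and S: "\<And>\<sigma>. \<sigma> \<in> S \<Longrightarrow> \<sigma> \<subseteq> U \<and> card \<sigma> = k"
    and faces: "\<And>\<sigma> v. \<sigma> \<in> S \<Longrightarrow> v \<in> \<sigma> \<Longrightarrow> \<exists>\<sigma>'\<in>S. \<sigma>' \<noteq> \<sigma> \<and> \<sigma> - {v} \<subseteq> \<sigma>'"
  shows "exchange_closed U ((\<lambda>\<sigma>. U - \<sigma>) ` S)"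
  unfolding exchange_closed_def
proof (intro ballI)
  fix A v assume "A \<in> (\<lambda>\<sigma>. U - \<sigma>) ` S" and v: "v \<in> U - A"
  then obtain \<sigma> where \<sigma>: "\<sigma> \<in> S" "A = U - \<sigma>" and "v \<in> \<sigma>"
    by auto
  obtain \<sigma>' where \<sigma>': "\<sigma>' \<in> S" "\<sigma>' \<noteq> \<sigma>" "\<sigma> - {v} \<subseteq> \<sigma>'"
    using faces[OF \<sigma>(1) \<open>v \<in> \<sigma>\<close>] by blast
  have fin: "finite \<sigma>" "finite \<sigma>'"
    using S[OF \<sigma>(1)] S[OF \<sigma>'(1)] \<open>finite U\<close> finite_subset by blast+
  have "0 < card \<sigma>"
    using fin(1) \<open>v \<in> \<sigma>\<close> card_gt_0_iff by blast
  then have "card (\<sigma>' - (\<sigma> - {v})) = 1"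
    using S[OF \<sigma>(1)] S[OF \<sigma>'(1)] fin \<sigma>'(3) \<open>v \<in> \<sigma>\<close> by (simp add: card_Diff_subset)
  then obtain w where w: "\<sigma>' - (\<sigma> - {v}) = {w}"
    by (rule card_1_singletonE)
  then have \<sigma>'_eq: "\<sigma>' = insert w (\<sigma> - {v})"
    using \<sigma>'(3) by blast
  have "w \<noteq> v"
  proof
    assume "w = v"
    then have "\<sigma>' = \<sigma>"
      using \<sigma>'_eq \<open>v \<in> \<sigma>\<close> by blast
    with \<sigma>'(2) show False ..
  qed
  then have "w \<in> A"
    using w S[OF \<sigma>'(1)] \<sigma>(2) by blast
  moreover have "insert v (A - {w}) = U - \<sigma>'"
    using \<sigma>'_eq \<sigma>(2) \<open>w \<noteq> v\<close> \<open>v \<in> \<sigma>\<close> v by blast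
  ultimately show "\<exists>w\<in>A. insert v (A - {w}) \<in> (\<lambda>\<sigma>. U - \<sigma>) ` S"
    using \<sigma>'(1) by blast
qed

lemma card_Int_complements:
  assumes "finite U" "\<sigma>1 \<subseteq> U" "\<sigma>2 \<subseteq> U"
  shows "card (\<sigma>1 \<inter> \<sigma>2) + card U = card \<sigma>1 + card \<sigma>2 + card ((U - \<sigma>1) \<inter> (U - \<sigma>2))"
proof -
  have fin: "finite \<sigma>1" "finite \<sigma>2"
    using assms finite_subset by blast+
  have "(U - \<sigma>1) \<inter> (U - \<sigma>2) = U - (\<sigma>1 \<union> \<sigma>2)"
    by blast
  then have "card ((U - \<sigma>1) \<inter> (U - \<sigma>2)) = card U - card (\<sigma>1 \<union> \<sigma>2)"
    using assms fin by (simp add: card_Diff_subset)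
  moreover have "card (\<sigma>1 \<union> \<sigma>2) \<le> card U"
    using assms by (intro card_mono) auto
  ultimately show ?thesis
    using card_Un_Int[OF fin] by simp
qed

theorem mainTheorem13:
  fixes d :: nat and Z1 Z2 :: "nat set \<Rightarrow> 'a::field"
  assumes "d \<ge> 1"
    and "is_cycle (d + 4) d Z1" and "is_cycle (d + 4) d Z2"
    and "\<exists>s. Z1 s \<noteq> 0" and "\<exists>s. Z2 s \<noteq> 0"
  shows "\<exists>\<tau>\<in>simplices (d + 4) (d - 1). \<tau> \<in> K (supp Z1) \<and> \<tau> \<in> K (supp Z2)"
proof -
  let ?U = "{1..d + 4}"
  let ?compl = "\<lambda>Z :: nat set \<Rightarrow> 'a. (\<lambda>\<sigma>. ?U - \<sigma>) ` supp Z"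
  have triples: "A \<subseteq> ?U \<and> card A = 3" if Z: "is_cycle (d + 4) d Z" and A: "A \<in> ?compl Z"
    for Z A
  proof -
    obtain \<sigma> where \<sigma>: "\<sigma> \<in> supp Z" "A = ?U - \<sigma>"
      using A by blast
    note simplex = cycle_supp_simplex[OF Z \<sigma>(1)]
    then have "card A = card ?U - card \<sigma>"
      using \<sigma>(2) by (simp add: card_Diff_subset finite_subset)
    with simplex \<sigma>(2) show ?thesis
      by simp
  qed
  have closed: "exchange_closed ?U (?compl Z)" if "is_cycle (d + 4) d Z" for Z
    using exchange_closed_complements cycle_supp_simplex[OF that] cycle_supp_face_shared[OF that]
    by (metis finite_atLeastAtMost)
  obtain \<sigma>1 \<sigma>2 where "\<sigma>1 \<in> supp Z1" "\<sigma>2 \<in> supp Z2"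
    using assms(4,5) unfolding supp_def by blast
  then obtain \<sigma>1 \<sigma>2 where \<sigma>: "\<sigma>1 \<in> supp Z1" "\<sigma>2 \<in> supp Z2"
      and "2 \<le> card ((?U - \<sigma>1) \<inter> (?U - \<sigma>2))"
    using exchange_closed_share_two[OF closed[OF assms(2)] closed[OF assms(3)]
        triples[OF assms(2)] triples[OF assms(3)]] by blast
  moreover note simplex1 = cycle_supp_simplex[OF assms(2) \<sigma>(1)]
    and simplex2 = cycle_supp_simplex[OF assms(3) \<sigma>(2)]
  ultimately have "d \<le> card (\<sigma>1 \<inter> \<sigma>2)"
    using card_Int_complements[of ?U \<sigma>1 \<sigma>2] by simp
  then obtain \<tau> where \<tau>: "\<tau> \<subseteq> \<sigma>1 \<inter> \<sigma>2" "card \<tau> = d"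
    using obtain_subset_with_card_n by blast
  then have "\<tau> \<in> simplices (d + 4) (d - 1)"
    using simplex1 assms(1) unfolding simplices_def by auto
  moreover have "\<tau> \<in> K (supp Z1)" "\<tau> \<in> K (supp Z2)"
    using \<tau> \<sigma> unfolding K_def by auto
  ultimately show ?thesis by blast
qed

end
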